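(* Let $(S,I_S,\psi_S)$ be a complete and perfect object of $\mathcal{C}_{p^h}$. Then for every $a\in S/I_S$ there is a unique $\widetilde a\in S$ such that $\widetilde a\equiv a \bmod I_S$ and $\psi_S(\widetilde a)=\widetilde a^{\,p^h}$.
   Context: $\mathcal{C}_{p^h}$ (for a prime $p$ and integer $h\ge1$) is the category whose objects are triples $(R,I_R,\psi_R)$ with $R$ a commutative ring, $I_R\subseteq R$ an ideal with $p\in I_R$, and $\psi_R\colon R\to R$ a ring endomorphism such that $\psi_R(x)\equiv x^{p^h}\bmod I_R$ for all $x\in R$. A morphism $(R,I_R,\psi_R)\to(S,I_S,\psi_S)$ is a ring homomorphism $\mu$ with $\mu(I_R)\subseteq I_S$ and $\mu\psi_R=\psi_S\mu$. An object is complete if $R\to\lim_k R/I_R^k$ is an isomorphism, and perfect if $\psi_R$ is an isomorphism with $\psi_R(I_R)=I_R$. *)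

theory Defs
  imports Main "HOL-Computational_Algebra.Primes"
begin

definition is_ideal :: "'a::comm_ring_1 set \<Rightarrow> bool" where
  "is_ideal I \<longleftrightarrow> 0 \<in> I \<and> (\<forall>x\<in>I. \<forall>y\<in>I. x + y \<in> I) \<and> (\<forall>r. \<forall>x\<in>I. r * x \<in> I)"

definition ideal_gen :: "'a::comm_ring_1 set \<Rightarrow> 'a set" where
  "ideal_gen A = \<Inter>{J. is_ideal J \<and> A \<subseteq> J}"

fun ideal_pow :: "'a::comm_ring_1 set \<Rightarrow> nat \<Rightarrow> 'a set" where
  "ideal_pow I 0 = UNIV"
| "ideal_pow I (Suc k) = ideal_gen {a * b | a b. a \<in> ideal_pow I k \<and> b \<in> I}"

definition ring_endo :: "('a::comm_ring_1 \<Rightarrow> 'a) \<Rightarrow> bool" where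
  "ring_endo f \<longleftrightarrow> f 1 = 1 \<and> (\<forall>x y. f (x + y) = f x + f y) \<and> (\<forall>x y. f (x * y) = f x * f y)"

text \<open>Objects of the category \<open>C_{p^h}\<close>: \<open>(R, I, \<psi>)\<close>, with \<open>R\<close> the ambient type.\<close>
definition C_obj :: "nat \<Rightarrow> nat \<Rightarrow> 'a::comm_ring_1 set \<Rightarrow> ('a \<Rightarrow> 'a) \<Rightarrow> bool" where
  "C_obj p h I \<psi> \<longleftrightarrow> is_ideal I \<and> of_nat p \<in> I \<and> ring_endo \<psi> \<and>
     (\<forall>x. \<psi> x - x ^ (p ^ h) \<in> I)"

text \<open>Completeness: the canonical map \<open>R \<rightarrow> lim_k R/I^k\<close> is bijective.  An element of the
  inverse limit is a compatible family of classes, represented by a sequence \<open>x\<close> with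
  \<open>x (k+1) \<equiv> x k mod I^k\<close>; the canonical map sends \<open>r\<close> to the family of classes of \<open>r\<close>.\<close>
definition complete_obj :: "'a::comm_ring_1 set \<Rightarrow> bool" where
  "complete_obj I \<longleftrightarrow>
     (\<forall>r s. (\<forall>k. r - s \<in> ideal_pow I k) \<longrightarrow> r = s) \<and>
     (\<forall>x::nat \<Rightarrow> 'a. (\<forall>k. x (Suc k) - x k \<in> ideal_pow I k) \<longrightarrow>
        (\<exists>r. \<forall>k. r - x k \<in> ideal_pow I k))"

definition perfect_obj :: "'a::comm_ring_1 set \<Rightarrow> ('a \<Rightarrow> 'a) \<Rightarrow> bool" where
  "perfect_obj I \<psi> \<longleftrightarrow> bij \<psi> \<and> \<psi> ` I = I"

end

theory Submission
  imports Defs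
begin

text \<open>Write \<open>q = p^h\<close> and \<open>\<phi> = \<psi>\<^sup>-\<^sup>1\<close>. The solutions of \<open>\<psi> t = t^q\<close> are the fixed points of
  \<open>T x = \<phi> (x^q)\<close>, and \<open>T x \<equiv> x mod I\<close>. Since \<open>p \<in> I\<close>, raising to the \<open>p\<close>-th power maps
  \<open>x \<equiv> y mod I^k\<close> (\<open>k \<ge> 1\<close>) to \<open>x^p \<equiv> y^p mod I^(k+1)\<close>, and \<open>\<phi>\<close> preserves every \<open>I^k\<close>
  because \<open>\<psi> I = I\<close>; so \<open>T\<close> is a contraction for the \<open>I\<close>-adic topology. By completeness
  the iterates \<open>T^n a\<close> converge to a fixed point congruent to \<open>a\<close>, and two fixed points
  congruent mod \<open>I\<close> are congruent mod every \<open>I^k\<close>, hence equal by separatedness.\<close>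

lemma is_ideal_zero: "is_ideal J \<Longrightarrow> 0 \<in> J"
  unfolding is_ideal_def by blast

lemma is_ideal_add: "is_ideal J \<Longrightarrow> x \<in> J \<Longrightarrow> y \<in> J \<Longrightarrow> x + y \<in> J"
  unfolding is_ideal_def by blast

lemma is_ideal_mult_left: "is_ideal J \<Longrightarrow> x \<in> J \<Longrightarrow> r * x \<in> J"
  unfolding is_ideal_def by blast

lemma is_ideal_mult_right: "is_ideal J \<Longrightarrow> x \<in> J \<Longrightarrow> x * r \<in> J"
  unfolding is_ideal_def by (metis mult.commute)

lemma is_ideal_diff: "is_ideal J \<Longrightarrow> x \<in> J \<Longrightarrow> y \<in> J \<Longrightarrow> x - y \<in> J"
  using is_ideal_add[of J x "(-1) * y"] is_ideal_mult_left[of J y "-1"] by simp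

lemma is_ideal_diff_commute: "is_ideal J \<Longrightarrow> x - y \<in> J \<Longrightarrow> y - x \<in> J"
  using is_ideal_diff[of J 0 "x - y"] is_ideal_zero[of J] by simp

lemma is_ideal_sum: "is_ideal J \<Longrightarrow> (\<And>i. i \<in> A \<Longrightarrow> f i \<in> J) \<Longrightarrow> sum f A \<in> J"
  by (induction A rule: infinite_finite_induct) (simp_all add: is_ideal_zero is_ideal_add)

lemma is_ideal_power_diff: "is_ideal J \<Longrightarrow> x - y \<in> J \<Longrightarrow> x ^ n - y ^ n \<in> J"
  using power_diff_sumr2[of x n y] is_ideal_mult_right by metis

lemma is_ideal_ideal_gen: "is_ideal (ideal_gen A)"
  unfolding ideal_gen_def is_ideal_def by auto

lemma ideal_gen_subset: "A \<subseteq> ideal_gen A"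
  unfolding ideal_gen_def by auto

lemma ideal_gen_least: "is_ideal J \<Longrightarrow> A \<subseteq> J \<Longrightarrow> ideal_gen A \<subseteq> J"
  unfolding ideal_gen_def by auto

lemma is_ideal_ideal_pow: "is_ideal (ideal_pow I k)"
  by (cases k) (simp_all only: ideal_pow.simps is_ideal_ideal_gen, simp add: is_ideal_def)

lemma ideal_pow_Suc_mult: "a \<in> ideal_pow I k \<Longrightarrow> b \<in> I \<Longrightarrow> a * b \<in> ideal_pow I (Suc k)"
  using ideal_gen_subset by fastforce

lemma ideal_pow_Suc_subset: "ideal_pow I (Suc k) \<subseteq> ideal_pow I k"
  unfolding ideal_pow.simps(2)
  by (rule ideal_gen_least[OF is_ideal_ideal_pow])
    (use is_ideal_mult_right[OF is_ideal_ideal_pow] in blast)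

declare ideal_pow.simps(2)[simp del]

lemma ideal_pow_antimono: "k \<le> m \<Longrightarrow> ideal_pow I m \<subseteq> ideal_pow I k"
  using lift_Suc_antimono_le[of "ideal_pow I", OF ideal_pow_Suc_subset] by blast

lemma ideal_pow_1: "is_ideal I \<Longrightarrow> ideal_pow I 1 = I"
proof
  assume I: "is_ideal I"
  show "ideal_pow I 1 \<subseteq> I"
    unfolding One_nat_def ideal_pow.simps(2)
    by (rule ideal_gen_least[OF I]) (use is_ideal_mult_left[OF I] in auto)
  show "I \<subseteq> ideal_pow I 1"
    using ideal_pow_Suc_mult[of 1 I 0] by fastforce
qed

lemma ideal_pow_subset_ideal: "is_ideal I \<Longrightarrow> k \<ge> 1 \<Longrightarrow> ideal_pow I k \<subseteq> I"
  using ideal_pow_antimono[of 1 k I] ideal_pow_1[of I] by auto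

lemma power_diff_in_ideal_pow_Suc:
  assumes I: "is_ideal I" and p: "of_nat p \<in> I" and k: "k \<ge> 1"
    and xy: "x - y \<in> ideal_pow I k"
  shows "x ^ p - y ^ p \<in> ideal_pow I (Suc k)"
proof -
  \<comment> \<open>\<open>x^p - y^p = (x - y) s\<close> with \<open>s \<equiv> p y^(p-1) \<equiv> 0 mod I\<close>, since \<open>x \<equiv> y mod I\<close>.\<close>
  have xy_I: "x - y \<in> I"
    using xy ideal_pow_subset_ideal[OF I k] by auto
  define s where "s = (\<Sum>i<p. y ^ (p - Suc i) * x ^ i)"
  have factor: "x ^ p - y ^ p = (x - y) * s"
    unfolding s_def by (rule power_diff_sumr2)
  have "(\<Sum>i<p. y ^ (p - Suc i) * y ^ i) = (\<Sum>i<p. y ^ (p - 1))"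
    by (rule sum.cong) (auto simp: power_add[symmetric])
  then have s_split: "s = (\<Sum>i<p. y ^ (p - Suc i) * (x ^ i - y ^ i)) + of_nat p * y ^ (p - 1)"
    unfolding s_def by (simp add: right_diff_distrib sum_subtractf)
  have "(\<Sum>i<p. y ^ (p - Suc i) * (x ^ i - y ^ i)) \<in> I"
    by (rule is_ideal_sum[OF I]) (intro is_ideal_mult_left[OF I] is_ideal_power_diff[OF I xy_I])
  moreover have "of_nat p * y ^ (p - 1) \<in> I"
    using is_ideal_mult_right[OF I p] .
  ultimately have "s \<in> I"
    unfolding s_split by (rule is_ideal_add[OF I])
  then show ?thesis
    using factor ideal_pow_Suc_mult[OF xy] by simp
qed

lemma power_power_diff_in_ideal_pow:
  assumes I: "is_ideal I" and p: "of_nat p \<in> I" and k: "k \<ge> 1"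
    and xy: "x - y \<in> ideal_pow I k"
  shows "x ^ (p ^ h) - y ^ (p ^ h) \<in> ideal_pow I (k + h)"
proof (induction h)
  case 0
  then show ?case using xy by simp
next
  case (Suc h)
  have "(x ^ p ^ h) ^ p - (y ^ p ^ h) ^ p \<in> ideal_pow I (Suc (k + h))"
    by (rule power_diff_in_ideal_pow_Suc[OF I p _ Suc.IH]) (use k in simp)
  then show ?case
    by (simp add: power_mult[symmetric] mult.commute)
qed

lemma ring_endo_1: "ring_endo f \<Longrightarrow> f 1 = 1"
  and ring_endo_add: "ring_endo f \<Longrightarrow> f (x + y) = f x + f y"
  and ring_endo_mult: "ring_endo f \<Longrightarrow> f (x * y) = f x * f y"
  unfolding ring_endo_def by blast+

lemma ring_endo_diff: "ring_endo f \<Longrightarrow> f (x - y) = f x - f y"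
  using ring_endo_add[of f "x - y" y] by (simp add: eq_diff_eq)

lemma ring_endo_0: "ring_endo f \<Longrightarrow> f 0 = 0"
  using ring_endo_diff[of f 0 0] by simp

lemma ring_endo_inv:
  assumes bij: "bij f" and f: "ring_endo f"
  shows "ring_endo (inv f)"
proof -
  have inv_eq: "inv f y = x \<longleftrightarrow> f x = y" for x y
    using bij_inv_eq_iff[OF bij] by metis
  have f_inv: "f (inv f y) = y" for y
    by (rule surj_f_inv_f[OF bij_is_surj[OF bij]])
  show ?thesis
    unfolding ring_endo_def inv_eq
    by (simp add: ring_endo_1[OF f] ring_endo_add[OF f] ring_endo_mult[OF f] f_inv)
qed

lemma is_ideal_vimage_ring_endo:
  assumes f: "ring_endo f" and J: "is_ideal J"
  shows "is_ideal (f -` J)"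
  unfolding is_ideal_def
  by (simp add: ring_endo_0[OF f] ring_endo_add[OF f] ring_endo_mult[OF f]
      is_ideal_zero[OF J] is_ideal_add[OF J] is_ideal_mult_left[OF J])

lemma ring_endo_image_ideal_pow:
  assumes f: "ring_endo f" and f_I: "f ` I \<subseteq> I"
  shows "f ` ideal_pow I k \<subseteq> ideal_pow I k"
proof (induction k)
  case 0
  then show ?case by simp
next
  case (Suc k)
  have "f (a * b) \<in> ideal_pow I (Suc k)" if "a \<in> ideal_pow I k" "b \<in> I" for a b
    using Suc.IH f_I that ideal_pow_Suc_mult unfolding ring_endo_mult[OF f] by blast
  then have "{a * b |a b. a \<in> ideal_pow I k \<and> b \<in> I} \<subseteq> f -` ideal_pow I (Suc k)"
    by blast
  moreover have "is_ideal (f -` ideal_pow I (Suc k))"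
    by (rule is_ideal_vimage_ring_endo[OF f is_ideal_ideal_pow])
  ultimately have "ideal_pow I (Suc k) \<subseteq> f -` ideal_pow I (Suc k)"
    using ideal_gen_least unfolding ideal_pow.simps(2) by blast
  then show ?case by blast
qed

definition adic_contraction :: "'a::comm_ring_1 set \<Rightarrow> ('a \<Rightarrow> 'a) \<Rightarrow> bool" where
  "adic_contraction I T \<longleftrightarrow>
     (\<forall>k\<ge>1. \<forall>x y. x - y \<in> ideal_pow I k \<longrightarrow> T x - T y \<in> ideal_pow I (Suc k))"

lemma adic_contraction_fixed_point_unique:
  assumes I: "is_ideal I" and complete: "complete_obj I" and T: "adic_contraction I T"
    and "T s = s" and "T t = t" and st: "s - t \<in> I"
  shows "s = t"
proof -
  have "s - t \<in> ideal_pow I k" if "k \<ge> 1" for k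
    using that
  proof (induction k rule: dec_induct)
    case base
    then show ?case using st ideal_pow_1[OF I] by simp
  next
    case (step k)
    then show ?case
      using T \<open>T s = s\<close> \<open>T t = t\<close> unfolding adic_contraction_def by metis
  qed
  then have "s - t \<in> ideal_pow I k" for k
    by (cases k) auto
  then show ?thesis
    using complete unfolding complete_obj_def by blast
qed

lemma adic_contraction_fixed_point_exists:
  assumes I: "is_ideal I" and complete: "complete_obj I" and T: "adic_contraction I T"
    and T_cong: "\<And>x. T x - x \<in> I"
  shows "\<exists>t. t - a \<in> I \<and> T t = t"
proof -
  define x where "x n = (T ^^ n) a" for n
  have x_Suc: "x (Suc n) = T (x n)" for n
    by (simp add: x_def)
  have contract: "T u - T v \<in> ideal_pow I (Suc k)"
    if "k \<ge> 1" "u - v \<in> ideal_pow I k" for u v k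
    using T that unfolding adic_contraction_def by blast
  have x_step: "x (Suc n) - x n \<in> ideal_pow I (Suc n)" for n
  proof (induction n)
    case 0
    then show ?case using T_cong ideal_pow_1[OF I] by (simp add: x_def)
  next
    case (Suc n)
    then show ?case using contract[of "Suc n"] by (simp add: x_Suc)
  qed
  obtain t where t: "\<And>k. t - x k \<in> ideal_pow I k"
    using complete x_step ideal_pow_Suc_subset unfolding complete_obj_def by blast
  have "T t - t \<in> ideal_pow I k" for k
  proof (cases "k \<ge> 1")
    case True
    have "T t - x (Suc k) \<in> ideal_pow I k" and "t - x (Suc k) \<in> ideal_pow I k"
      using contract[OF True t] t[of "Suc k"] ideal_pow_Suc_subset unfolding x_Suc by blast+
    from is_ideal_diff[OF is_ideal_ideal_pow this] show ?thesis by simp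
  qed (simp add: not_less_eq_eq)
  then have "T t = t"
    using complete unfolding complete_obj_def by blast
  moreover have "t - a \<in> I"
    using is_ideal_add[OF I t[of 1, unfolded ideal_pow_1[OF I]] T_cong[of a]]
    by (simp add: x_def)
  ultimately show ?thesis by blast
qed

lemma adic_contraction_ex1_fixed_point:
  assumes I: "is_ideal I" and complete: "complete_obj I" and T: "adic_contraction I T"
    and T_cong: "\<And>x. T x - x \<in> I"
  shows "\<exists>!t. t - a \<in> I \<and> T t = t"
proof -
  obtain t where t: "t - a \<in> I" "T t = t"
    using adic_contraction_fixed_point_exists[OF I complete T T_cong] by blast
  have "s = t" if "s - a \<in> I" "T s = s" for s
    using adic_contraction_fixed_point_unique[OF I complete T \<open>T s = s\<close> t(2)]
      is_ideal_diff[OF I that(1) t(1)] by simp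
  with t show ?thesis by blast
qed

lemma adic_contraction_inv_frobenius:
  assumes I: "is_ideal I" and p: "of_nat p \<in> I" and h: "h \<ge> 1"
    and \<phi>: "ring_endo \<phi>" and \<phi>_I: "\<phi> ` I \<subseteq> I"
  shows "adic_contraction I (\<lambda>x. \<phi> (x ^ (p ^ h)))"
  unfolding adic_contraction_def
proof (intro allI impI)
  fix k :: nat and x y
  assume "k \<ge> 1" and "x - y \<in> ideal_pow I k"
  then have "x ^ (p ^ h) - y ^ (p ^ h) \<in> ideal_pow I (Suc k)"
    using power_power_diff_in_ideal_pow[OF I p] ideal_pow_antimono[of "Suc k" "k + h" I] h by auto
  then show "\<phi> (x ^ (p ^ h)) - \<phi> (y ^ (p ^ h)) \<in> ideal_pow I (Suc k)"
    using ring_endo_image_ideal_pow[OF \<phi> \<phi>_I] ring_endo_diff[OF \<phi>] by (metis image_subset_iff)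
qed

lemma ring_automorphism_inv_cong:
  assumes bij: "bij \<psi>" and \<psi>: "ring_endo \<psi>" and inv_I: "inv \<psi> ` I \<subseteq> I"
    and y: "y - \<psi> x \<in> I"
  shows "inv \<psi> y - x \<in> I"
proof -
  have "inv \<psi> (y - \<psi> x) \<in> I"
    by (rule subsetD[OF inv_I imageI[OF y]])
  then show ?thesis
    by (simp add: ring_endo_diff[OF ring_endo_inv[OF bij \<psi>]] inv_f_f[OF bij_is_inj[OF bij]])
qed

theorem corollary2p2:
  fixes p h :: nat and I :: "'a::comm_ring_1 set" and \<psi> :: "'a \<Rightarrow> 'a"
  assumes "prime p" and "h \<ge> 1"
    and "C_obj p h I \<psi>" and "complete_obj I" and "perfect_obj I \<psi>"
  shows "\<forall>a. \<exists>!t. t - a \<in> I \<and> \<psi> t = t ^ (p ^ h)"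
proof -
  have I: "is_ideal I" and p: "of_nat p \<in> I" and \<psi>: "ring_endo \<psi>"
    and \<psi>_cong: "\<And>x. \<psi> x - x ^ (p ^ h) \<in> I"
    and bij: "bij \<psi>" and \<psi>_I: "\<psi> ` I = I"
    using assms(3,5) unfolding C_obj_def perfect_obj_def by auto
  define T where "T x = inv \<psi> (x ^ (p ^ h))" for x
  have fixed_iff: "T t = t \<longleftrightarrow> \<psi> t = t ^ (p ^ h)" for t
    using bij_inv_eq_iff[OF bij] unfolding T_def by metis
  have inv_I: "inv \<psi> ` I \<subseteq> I"
    using image_inv_f_f[OF bij_is_inj[OF bij], of I] unfolding \<psi>_I by simp
  have T_cong: "T x - x \<in> I" for x
    unfolding T_def
    by (rule ring_automorphism_inv_cong[OF bij \<psi> inv_I is_ideal_diff_commute[OF I \<psi>_cong]])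
  have T: "adic_contraction I T"
    unfolding T_def by (rule adic_contraction_inv_frobenius[OF I p assms(2) ring_endo_inv[OF bij \<psi>] inv_I])
  show ?thesis
    using adic_contraction_ex1_fixed_point[OF I assms(4) T T_cong] by (simp add: fixed_iff)
qed

end
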